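(* Let $\Gamma=\{f_1,\dots,f_n\}$ be a family of weak weight-functions such that $f_i(x_1,\dots,x_n)\le f_i(x_1+\lambda,\dots,x_n+\lambda)$ for every $i\in\{1,\dots,n\}$, every $\mathbf{x}\in[0,1]^n$ and every $\lambda\in[0,1]$ with $(x_1+\lambda,\dots,x_n+\lambda)\in[0,1]^n$. Then $\mathsf{BGM}_\Gamma$ is a pre-aggregation function which is $(k,\dots,k)$-increasing for every $k>0$.
   Context: A family of weak weight-functions (wFWF) is a family $\Gamma=\{f_i:[0,1]^n\to[0,1]\mid 1\le i\le n\}$ such that (I) $\sum_{i=1}^n f_i(\mathbf{x})\le 1$ for all $\mathbf{x}\in[0,1]^n$ and (II) $\sum_{i=1}^n f_i(1,\dots,1)=1$. The bounded generalized mixture function is $\mathsf{BGM}_\Gamma(\mathbf{x})=\sum_{i=1}^n f_i(\mathbf{x})\,x_i$. For a nonzero $\mathbf{r}\in\mathbb{R}^n$, $F:[0,1]^n\to[0,1]$ is $\mathbf{r}$-increasing if $F(\mathbf{x})\le F(x_1+tr_1,\dots,x_n+tr_n)$ for all $\mathbf{x}\in[0,1]^n$ and $t>0$ with $(x_1+tr_1,\dots,x_n+tr_n)\in[0,1]^n$. $F$ is a pre-aggregation function if $F(0,\dots,0)=0$, $F(1,\dots,1)=1$ and $F$ is $\mathbf{r}$-increasing for some nonzero $\mathbf{r}\in[0,1]^n$. *)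

theory Defs
  imports "HOL-Analysis.Analysis"
begin

text \<open>Points of [0,1]^n are modelled as vectors of type real ^ 'n; the index type 'n
  plays the role of {1..n}.\<close>

definition unit_cube :: "(real ^ 'n) set" where
  "unit_cube = {x. \<forall>i. 0 \<le> x $ i \<and> x $ i \<le> 1}"

definition wFWF :: "('n::finite \<Rightarrow> real ^ 'n \<Rightarrow> real) \<Rightarrow> bool" where
  "wFWF f \<longleftrightarrow>
     (\<forall>i. \<forall>x\<in>unit_cube. 0 \<le> f i x \<and> f i x \<le> 1) \<and>
     (\<forall>x\<in>unit_cube. (\<Sum>i\<in>UNIV. f i x) \<le> 1) \<and>
     (\<Sum>i\<in>UNIV. f i (\<chi> j. 1)) = 1"

definition BGM :: "('n::finite \<Rightarrow> real ^ 'n \<Rightarrow> real) \<Rightarrow> real ^ 'n \<Rightarrow> real" where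
  "BGM f x = (\<Sum>i\<in>UNIV. f i x * x $ i)"

definition r_increasing :: "real ^ 'n \<Rightarrow> (real ^ 'n \<Rightarrow> real) \<Rightarrow> bool" where
  "r_increasing r F \<longleftrightarrow>
     (\<forall>x\<in>unit_cube. \<forall>t::real. t > 0 \<longrightarrow> x + t *\<^sub>R r \<in> unit_cube \<longrightarrow> F x \<le> F (x + t *\<^sub>R r))"

definition pre_aggregation :: "(real ^ 'n \<Rightarrow> real) \<Rightarrow> bool" where
  "pre_aggregation F \<longleftrightarrow>
     (\<forall>x\<in>unit_cube. 0 \<le> F x \<and> F x \<le> 1) \<and>
     F (\<chi> j. 0) = 0 \<and> F (\<chi> j. 1) = 1 \<and>
     (\<exists>r\<in>unit_cube. r \<noteq> 0 \<and> r_increasing r F)"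

end

theory Submission
  imports Defs
begin

text \<open>Each summand \<open>f\<^sub>i(x) x\<^sub>i\<close> of \<open>BGM\<close> is a product of two nonnegative factors that
  both grow when \<open>x\<close> is shifted along the diagonal, and moving by \<open>t (k,\<dots>,k)\<close> is such a
  shift by \<open>\<lambda> = t k\<close>, which lies in \<open>[0,1]\<close> since both endpoints lie in the cube.
  The bounds \<open>0 \<le> BGM x \<le> 1\<close> come from \<open>x\<^sub>i \<le> 1\<close> and \<open>\<Sum> f\<^sub>i(x) \<le> 1\<close>.\<close>

lemma unit_cube_component:
  assumes "x \<in> unit_cube"
  shows "0 \<le> x $ i" "x $ i \<le> 1"
  using assms unfolding unit_cube_def by auto

lemma ones_in_unit_cube: "(\<chi> j. 1) \<in> unit_cube"
  by (simp add: unit_cube_def)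

lemma diagonal_shift_in_unit_cube_le_1:
  assumes "x \<in> unit_cube" "x + (\<chi> j. l) \<in> unit_cube"
  shows "l \<le> 1"
proof -
  fix i :: 'a
  have "0 \<le> x $ i" "(x + (\<chi> j. l)) $ i \<le> 1"
    using unit_cube_component assms by blast+
  then show ?thesis by simp
qed

lemma BGM_zero: "BGM f (\<chi> j. 0) = 0"
  by (simp add: BGM_def)

lemma wFWF_BGM_ones:
  assumes "wFWF f"
  shows "BGM f (\<chi> j. 1) = 1"
  using assms by (simp add: wFWF_def BGM_def)

lemma wFWF_BGM_range:
  assumes "wFWF f" and x: "x \<in> unit_cube"
  shows "0 \<le> BGM f x" "BGM f x \<le> 1"
proof -
  have f_range: "0 \<le> f i x" "f i x \<le> 1" for i
    using assms unfolding wFWF_def by auto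
  note x_range = unit_cube_component[OF x]
  show "0 \<le> BGM f x"
    unfolding BGM_def using f_range x_range by (intro sum_nonneg) simp
  have "BGM f x \<le> (\<Sum>i\<in>UNIV. f i x)"
    unfolding BGM_def using f_range x_range by (intro sum_mono) (simp add: mult_left_le)
  also have "\<dots> \<le> 1"
    using assms unfolding wFWF_def by blast
  finally show "BGM f x \<le> 1" .
qed

lemma BGM_diagonal_shift_mono:
  assumes "\<And>i. 0 \<le> f i x" "\<And>i. 0 \<le> x $ i" "0 \<le> l"
    and "\<And>i. f i x \<le> f i (x + (\<chi> j. l))"
  shows "BGM f x \<le> BGM f (x + (\<chi> j. l))"
  unfolding BGM_def
proof (intro sum_mono)
  fix i
  have "x $ i \<le> (x + (\<chi> j. l)) $ i"
    using assms(3) by simp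
  then show "f i x * x $ i \<le> f i (x + (\<chi> j. l)) * (x + (\<chi> j. l)) $ i"
    using assms by (intro mult_mono) (auto intro: order_trans)
qed

lemma wFWF_BGM_r_increasing_diagonal:
  fixes f :: "'n::finite \<Rightarrow> real ^ 'n \<Rightarrow> real"
  assumes "wFWF f"
    and shift_mono: "\<And>i x l. x \<in> unit_cube \<Longrightarrow> 0 \<le> l \<Longrightarrow> l \<le> 1 \<Longrightarrow>
           x + (\<chi> j. l) \<in> unit_cube \<Longrightarrow> f i x \<le> f i (x + (\<chi> j. l))"
    and "k > 0"
  shows "r_increasing (\<chi> j. k) (BGM f)"
  unfolding r_increasing_def
proof (intro ballI allI impI)
  fix x :: "real ^ 'n" and t :: real
  assume x: "x \<in> unit_cube" and "t > 0" and "x + t *\<^sub>R (\<chi> j. k) \<in> unit_cube"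
  moreover have shift: "x + t *\<^sub>R (\<chi> j. k) = x + (\<chi> j. t * k)"
    by (simp add: vec_eq_iff)
  ultimately have y: "x + (\<chi> j. t * k) \<in> unit_cube" and l: "0 \<le> t * k" "t * k \<le> 1"
    using \<open>k > 0\<close> diagonal_shift_in_unit_cube_le_1 by auto
  have "0 \<le> f i x" for i
    using \<open>wFWF f\<close> x unfolding wFWF_def by blast
  then show "BGM f x \<le> BGM f (x + t *\<^sub>R (\<chi> j. k))"
    unfolding shift
    using unit_cube_component(1)[OF x] l shift_mono[OF x l y]
    by (intro BGM_diagonal_shift_mono)
qed

theorem proposition10:
  fixes f :: "'n::finite \<Rightarrow> real ^ 'n \<Rightarrow> real"
  assumes "wFWF f"
    and "\<And>i x l. x \<in> unit_cube \<Longrightarrow> 0 \<le> l \<Longrightarrow> l \<le> 1 \<Longrightarrow>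
           x + (\<chi> j. l) \<in> unit_cube \<Longrightarrow> f i x \<le> f i (x + (\<chi> j. l))"
  shows "pre_aggregation (BGM f) \<and> (\<forall>k::real. k > 0 \<longrightarrow> r_increasing (\<chi> j. k) (BGM f))"
proof -
  have increasing: "\<forall>k::real. k > 0 \<longrightarrow> r_increasing (\<chi> j. k) (BGM f)"
    using wFWF_BGM_r_increasing_diagonal[OF assms] by blast
  have "(\<chi> j. 1) \<noteq> (0 :: real ^ 'n)"
    by (simp add: vec_eq_iff)
  then have "\<exists>r\<in>unit_cube. r \<noteq> 0 \<and> r_increasing r (BGM f)"
    using ones_in_unit_cube increasing by auto
  then show ?thesis
    unfolding pre_aggregation_def
    using wFWF_BGM_range[OF assms(1)] wFWF_BGM_ones[OF assms(1)] BGM_zero increasing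
    by blast
qed

end
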